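(* Let $p\in(1,2)$. For $u\in\mathbb{R}^2$ and indices $\kappa,\lambda,i,j\in\{1,2\}$ set $$A^{\kappa\lambda}_{ij}(u)=\delta_{\kappa\lambda}\delta_{ij}+\Big(\delta_{\kappa i}+\tfrac{2p}{2-p}\tfrac{u_iu_\kappa}{1+|u|^2}\Big)\Big(\delta_{\lambda j}+\tfrac{2p}{2-p}\tfrac{u_ju_\lambda}{1+|u|^2}\Big),$$ and for $z,\bar z\in\mathbb{R}^{2\times 2}$ let $A(u)(z,\bar z)=\sum_{\kappa,\lambda,i,j}A^{\kappa\lambda}_{ij}(u)z^\kappa_i\bar z^\lambda_j$. Let $g\colon\mathbb{R}\to[0,1]$ be a symmetric smooth function with $\mathbf{1}_{\{0\}}\le g\le\mathbf{1}_{(-1,1)}$, and put $m_g=(p-1)^{-1}\big(1+\sup_{s\in\mathbb{R}}\{|g'(s)|+2|g''(s)|s\}\big)$. Define $f\colon(\mathbb{R}^2\setminus\{0\})\times\mathbb{R}^{2\times2}\to\mathbb{R}$ by $$f(x,z)=\big(g(|z|^2)+m_g\,A(x/|x|)(z,z)\big)^{p/2}.$$ Then $f$ is smooth with respect to $z$, and there exist constants $L\ge\nu>0$ depending only on $p$ and $m_g$ such that: $D_{zz}f(x,z)$ is jointly continuous in $(x,z)\in(\mathbb{R}^2\setminus\{0\})\times\mathbb{R}^{2\times 2}$; $\nu|z|^p\le f(x,z)\le L(1+|z|)^p$; and $\nu(1+|z|)^{p-2}|\lambda|^2\le D_{zz}f(x,z)(\lambda,\lambda)\le L(1+|z|)^{p-2}|\lambda|^2$,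 for all $x\in\mathbb{R}^2\setminus\{0\}$ and $z,\lambda\in\mathbb{R}^{2\times2}$.
   Context: $\delta$ denotes the Kronecker delta and $\mathbf{1}_X$ the indicator function of a set $X$. For $z\in\mathbb{R}^{2\times 2}$, $z^\kappa_i$ denotes its entries and $|z|$ the Euclidean (Frobenius) norm. *)

theory Defs
  imports "HOL-Analysis.Analysis"
begin

fun dd :: "('a::real_normed_vector \<Rightarrow> real) \<Rightarrow> 'a list \<Rightarrow> 'a \<Rightarrow> real" where
  "dd f [] = f"
| "dd f (h # hs) = (\<lambda>z. frechet_derivative (dd f hs) (at z) h)"

definition smooth_on :: "'a::real_normed_vector set \<Rightarrow> ('a \<Rightarrow> real) \<Rightarrow> bool" where
  "smooth_on S f \<longleftrightarrow> (\<forall>hs z. z \<in> S \<longrightarrow> dd f hs differentiable (at z))"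

definition kdelta :: "2 \<Rightarrow> 2 \<Rightarrow> real" where
  "kdelta a b = (if a = b then 1 else 0)"

definition Acoef :: "real \<Rightarrow> real^2 \<Rightarrow> 2 \<Rightarrow> 2 \<Rightarrow> 2 \<Rightarrow> 2 \<Rightarrow> real" where
  "Acoef p u k l i j =
     kdelta k l * kdelta i j
     + (kdelta k i + (2*p/(2-p)) * (u$i * u$k) / (1 + (norm u)\<^sup>2))
     * (kdelta l j + (2*p/(2-p)) * (u$j * u$l) / (1 + (norm u)\<^sup>2))"

text \<open>A(u)(z,zbar), with z$k$i the entry z^k_i.\<close>
definition Aform :: "real \<Rightarrow> real^2 \<Rightarrow> real^2^2 \<Rightarrow> real^2^2 \<Rightarrow> real" where
  "Aform p u z zb = (\<Sum>k\<in>UNIV. \<Sum>l\<in>UNIV. \<Sum>i\<in>UNIV. \<Sum>j\<in>UNIV.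
      Acoef p u k l i j * z$k$i * zb$l$j)"

definition admissible_g :: "(real \<Rightarrow> real) \<Rightarrow> bool" where
  "admissible_g g \<longleftrightarrow> smooth_on UNIV g \<and> (\<forall>s. g (-s) = g s)
     \<and> (\<forall>s. 0 \<le> g s \<and> g s \<le> 1)
     \<and> g 0 = 1 \<and> (\<forall>s. \<bar>s\<bar> \<ge> 1 \<longrightarrow> g s = 0)"

definition m_g :: "real \<Rightarrow> (real \<Rightarrow> real) \<Rightarrow> real" where
  "m_g p g = (1 + (SUP s. \<bar>deriv g s\<bar> + 2 * \<bar>deriv (deriv g) s\<bar> * s)) / (p - 1)"

definition fdens :: "real \<Rightarrow> (real \<Rightarrow> real) \<Rightarrow> real^2 \<Rightarrow> real^2^2 \<Rightarrow> real" where
  "fdens p g x z = (g ((norm z)\<^sup>2) + m_g p g * Aform p (x /\<^sub>R norm x) z z) powr (p/2)"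

end

theory Submission
  imports Defs
begin

text \<open>The coefficients factor as \<open>A(u)(z, z') = \<langle>z, z'\<rangle> + \<langle>W, z\<rangle> \<langle>W, z'\<rangle>\<close> for a bounded matrix
  \<open>W = W(u)\<close>, so \<open>f = b^(p/2)\<close> with \<open>b(z) = g(|z|\<^sup>2) + m (|z|\<^sup>2 + \<langle>W, z\<rangle>\<^sup>2)\<close>. Writing \<open>T\<close> for
  the supremum in the definition of \<open>m\<close>, we have \<open>g(s) \<ge> 1 - T s\<close> and \<open>m - T = (2 - p) m + 1 \<ge> 1\<close>,
  so \<open>b\<close> is comparable to \<open>1 + |z|\<^sup>2\<close>, which gives the growth bounds. For the Hessian,
  \<open>D\<^sup>2(b^(p/2)) = (p/2) b^(p/2 - 2) (b D\<^sup>2b - (1 - p/2) (Db)\<^sup>2)\<close>; estimating \<open>Db\<close> by Cauchy-Schwarz,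
  separately in its \<open>g\<close>-part and its \<open>m\<close>-part, and using \<open>|g'(s)| + 2 |g''(s)| s \<le> T\<close>, the size of
  \<open>m\<close> forces \<open>b D\<^sup>2b - (1 - p/2) (Db)\<^sup>2 \<ge> 2 \<delta> b |\<lambda>|\<^sup>2\<close> with \<open>\<delta> > 0\<close> depending on \<open>p\<close> and \<open>m\<close> only.
  Smoothness in \<open>z\<close> holds because \<open>b > 0\<close> is built from \<open>g\<close>, inner products and arithmetic.\<close>

section \<open>Smooth functions generated by a profile\<close>

lemma smooth_on_has_real_derivative:
  assumes "smooth_on UNIV g"
  shows "(dd g hs has_real_derivative dd g (1 # hs) s) (at s)"
proof -
  have "dd g hs differentiable (at s)"
    using assms unfolding smooth_on_def by blast
  then have D: "(dd g hs has_derivative frechet_derivative (dd g hs) (at s)) (at s)"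
    by (simp add: frechet_derivative_works)
  have eq: "frechet_derivative (dd g hs) (at s) = (\<lambda>t. dd g (1 # hs) s * t)"
  proof
    fix t :: real
    have "frechet_derivative (dd g hs) (at s) (t *\<^sub>R 1) = t *\<^sub>R frechet_derivative (dd g hs) (at s) 1"
      by (rule linear_cmul[OF has_derivative_linear[OF D]])
    then show "frechet_derivative (dd g hs) (at s) t = dd g (1 # hs) s * t"
      by simp
  qed
  show ?thesis
    using D unfolding has_field_derivative_def eq .
qed

lemma has_derivative_powr_const:
  fixes F :: "'a::real_normed_vector \<Rightarrow> real"
  assumes "(F has_derivative F') (at z)" and "0 < F z"
  shows "((\<lambda>z. F z powr a) has_derivative (\<lambda>h. F' h * (a * F z powr (a - 1)))) (at z)"
  using DERIV_compose_FDERIV[OF has_real_derivative_powr[OF assms(2)] assms(1)] by simp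

text \<open>Each generating operation has a derivative formula that stays inside the class, so a
  derivative of a member is again a member; this is how smoothness of the density is proved.\<close>

inductive_set smooth_closure :: "(real \<Rightarrow> real) \<Rightarrow> ('a::real_normed_vector \<Rightarrow> real) set"
  for g :: "real \<Rightarrow> real"
where
  const: "(\<lambda>z. c) \<in> smooth_closure g"
| linear: "bounded_linear f \<Longrightarrow> f \<in> smooth_closure g"
| add: "F \<in> smooth_closure g \<Longrightarrow> G \<in> smooth_closure g \<Longrightarrow> (\<lambda>z. F z + G z) \<in> smooth_closure g"
| mult: "F \<in> smooth_closure g \<Longrightarrow> G \<in> smooth_closure g \<Longrightarrow> (\<lambda>z. F z * G z) \<in> smooth_closure g"
| profile: "F \<in> smooth_closure g \<Longrightarrow> (\<lambda>z. dd g (replicate n 1) (F z)) \<in> smooth_closure g"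
| powr: "F \<in> smooth_closure g \<Longrightarrow> (\<forall>z. 0 < F z) \<Longrightarrow> (\<lambda>z. F z powr a) \<in> smooth_closure g"

lemma smooth_closure_has_derivative:
  assumes g: "smooth_on UNIV g" and "F \<in> smooth_closure g"
  shows "\<exists>F'. (\<forall>z. (F has_derivative F' z) (at z)) \<and> (\<forall>h. (\<lambda>z. F' z h) \<in> smooth_closure g)"
  using assms(2)
proof induction
  case (const c)
  show ?case
    by (intro exI[of _ "\<lambda>z h. 0"]) (simp add: smooth_closure.const)
next
  case (linear f)
  then show ?case
    by (intro exI[of _ "\<lambda>z. f"]) (simp add: smooth_closure.const bounded_linear_imp_has_derivative)
next
  case (add F G)
  then obtain F' G' where "\<forall>z. (F has_derivative F' z) (at z)" "\<forall>h. (\<lambda>z. F' z h) \<in> smooth_closure g"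
    and "\<forall>z. (G has_derivative G' z) (at z)" "\<forall>h. (\<lambda>z. G' z h) \<in> smooth_closure g"
    by blast
  then show ?case
    by (intro exI[of _ "\<lambda>z h. F' z h + G' z h"]) (simp add: smooth_closure.add has_derivative_add)
next
  case (mult F G)
  then obtain F' G' where F': "\<forall>z. (F has_derivative F' z) (at z)" "\<forall>h. (\<lambda>z. F' z h) \<in> smooth_closure g"
    and G': "\<forall>z. (G has_derivative G' z) (at z)" "\<forall>h. (\<lambda>z. G' z h) \<in> smooth_closure g"
    by blast
  show ?case
  proof (intro exI[of _ "\<lambda>z h. F z * G' z h + F' z h * G z"] conjI allI)
    fix z
    show "((\<lambda>z. F z * G z) has_derivative (\<lambda>h. F z * G' z h + F' z h * G z)) (at z)"
      using F' G' by (auto intro!: has_derivative_mult)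
  next
    fix h
    show "(\<lambda>z. F z * G' z h + F' z h * G z) \<in> smooth_closure g"
      using F'(2) G'(2)
      by (intro smooth_closure.add[OF smooth_closure.mult[OF mult.hyps(1)] smooth_closure.mult[OF _ mult.hyps(2)]]) auto
  qed
next
  case (profile F n)
  then obtain F' where F': "\<forall>z. (F has_derivative F' z) (at z)" "\<forall>h. (\<lambda>z. F' z h) \<in> smooth_closure g"
    by blast
  show ?case
  proof (intro exI[of _ "\<lambda>z h. F' z h * dd g (replicate (Suc n) 1) (F z)"] conjI allI)
    fix z
    show "((\<lambda>z. dd g (replicate n 1) (F z)) has_derivative
        (\<lambda>h. F' z h * dd g (replicate (Suc n) 1) (F z))) (at z)"
      using DERIV_compose_FDERIV[OF smooth_on_has_real_derivative[OF g] F'(1)[rule_format]]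
      by simp
  next
    fix h
    show "(\<lambda>z. F' z h * dd g (replicate (Suc n) 1) (F z)) \<in> smooth_closure g"
      using F'(2) by (intro smooth_closure.mult[OF _ smooth_closure.profile[OF profile.hyps(1)]]) auto
  qed
next
  case (powr F a)
  then obtain F' where F': "\<forall>z. (F has_derivative F' z) (at z)" "\<forall>h. (\<lambda>z. F' z h) \<in> smooth_closure g"
    by blast
  show ?case
  proof (intro exI[of _ "\<lambda>z h. F' z h * (a * F z powr (a - 1))"] conjI allI)
    fix z
    show "((\<lambda>z. F z powr a) has_derivative (\<lambda>h. F' z h * (a * F z powr (a - 1)))) (at z)"
      using F' powr.hyps by (intro has_derivative_powr_const) auto
  next
    fix h
    show "(\<lambda>z. F' z h * (a * F z powr (a - 1))) \<in> smooth_closure g"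
      using F'(2)
      by (intro smooth_closure.mult[OF _ smooth_closure.mult[OF smooth_closure.const smooth_closure.powr[OF powr.hyps]]]) auto
  qed
qed

lemma smooth_closure_dd:
  assumes "smooth_on UNIV g" and "F \<in> smooth_closure g"
  shows "dd F hs \<in> smooth_closure g"
proof (induction hs)
  case Nil
  then show ?case using assms by simp
next
  case (Cons h hs)
  then obtain F' where F': "\<forall>z. (dd F hs has_derivative F' z) (at z)"
    and F'_closure: "\<forall>h. (\<lambda>z. F' z h) \<in> smooth_closure g"
    using smooth_closure_has_derivative[OF assms(1)] by blast
  have "dd F (h # hs) = (\<lambda>z. F' z h)"
    using frechet_derivative_at[OF F'[rule_format]] by auto
  with F'_closure show ?case by simp
qed

lemma smooth_closure_smooth_on:
  assumes "smooth_on UNIV g" and "F \<in> smooth_closure g"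
  shows "smooth_on UNIV F"
  unfolding smooth_on_def differentiable_def
  using smooth_closure_has_derivative[OF assms(1) smooth_closure_dd[OF assms]] by blast

section \<open>The quadratic form\<close>

text \<open>The factor \<open>W\<close> in \<open>A\<^sup>\<kappa>\<^sup>\<lambda>\<^sub>i\<^sub>j(u) = \<delta>\<^sub>\<kappa>\<^sub>\<lambda> \<delta>\<^sub>i\<^sub>j + W\<^sup>\<kappa>\<^sub>i W\<^sup>\<lambda>\<^sub>j\<close>.\<close>

definition Afactor :: "real \<Rightarrow> real^2 \<Rightarrow> real^2^2" where
  "Afactor p u = (\<chi> k i. kdelta k i + (2*p/(2-p)) * (u$i * u$k) / (1 + (norm u)\<^sup>2))"

lemma inner_vec22:
  "inner (z::real^2^2) w = z$1$1 * w$1$1 + z$1$2 * w$1$2 + z$2$1 * w$2$1 + z$2$2 * w$2$2"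
  by (simp add: inner_vec_def UNIV_2)

lemma Aform_eq_inner: "Aform p u z zb = inner z zb + inner (Afactor p u) z * inner (Afactor p u) zb"
proof -
  have sum_UNIV_2: "(\<Sum>i\<in>(UNIV::2 set). f i) = f 1 + f 2" for f :: "2 \<Rightarrow> real"
    by (simp add: UNIV_2)
  show ?thesis
    unfolding Aform_def Acoef_def inner_vec22 Afactor_def
    by (simp add: sum_UNIV_2 kdelta_def algebra_simps)
qed

lemma abs_Afactor_entry_le:
  assumes "0 \<le> p" and "p < 2"
  shows "\<bar>Afactor p u $ k $ i\<bar> \<le> 1 + 2*p/(2-p)"
proof -
  define c where "c = 2*p/(2-p)"
  define Q where "Q = (u$i * u$k) / (1 + (norm u)\<^sup>2)"
  have "\<bar>u$i * u$k\<bar> \<le> (norm u)\<^sup>2"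
    unfolding abs_mult power2_eq_square
    by (intro mult_mono) (simp_all add: component_le_norm_cart)
  then have "\<bar>Q\<bar> \<le> 1"
    unfolding Q_def by (simp add: abs_divide divide_le_eq_1 add_pos_nonneg)
  moreover have "0 \<le> c"
    unfolding c_def using assms by simp
  ultimately have "\<bar>c * Q\<bar> \<le> c"
    by (simp add: abs_mult mult_left_le)
  moreover have "\<bar>kdelta k i\<bar> \<le> 1"
    by (simp add: kdelta_def)
  moreover have entry: "Afactor p u $ k $ i = kdelta k i + c * Q"
    unfolding Afactor_def c_def Q_def by simp
  ultimately show ?thesis
    using abs_triangle_ineq[of "kdelta k i" "c * Q"] unfolding c_def[symmetric] entry by linarith
qed

lemma Afactor_inner_sq_le:
  assumes "0 \<le> p" and "p < 2"
  shows "(inner (Afactor p u) z)\<^sup>2 \<le> 4 * (1 + 2*p/(2-p))\<^sup>2 * (norm z)\<^sup>2"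
proof -
  let ?V = "1 + 2*p/(2-p)"
  have entry: "(Afactor p u $ k $ i)\<^sup>2 \<le> ?V\<^sup>2" for k i
    using abs_Afactor_entry_le[OF assms, of u k i] abs_le_square_iff by fastforce
  have "inner (Afactor p u) (Afactor p u) \<le> 4 * ?V\<^sup>2"
    unfolding inner_vec22
    using entry[of 1 1] entry[of 1 2] entry[of 2 1] entry[of 2 2] by (simp add: power2_eq_square)
  then show ?thesis
    using Cauchy_Schwarz_ineq[of "Afactor p u" z] mult_right_mono[of _ _ "inner z z"]
    unfolding power2_norm_eq_inner by fastforce
qed

section \<open>The profile \<open>g\<close>\<close>

lemma smooth_on_deriv_dd:
  fixes g :: "real \<Rightarrow> real"
  assumes "smooth_on UNIV g"
  shows "deriv (dd g hs) = dd g (1 # hs)"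
  using DERIV_imp_deriv[OF smooth_on_has_real_derivative[OF assms]] by blast

lemma smooth_on_continuous_dd:
  fixes g :: "real \<Rightarrow> real"
  assumes "smooth_on UNIV g"
  shows "continuous_on UNIV (dd g hs)"
  using DERIV_isCont[OF smooth_on_has_real_derivative[OF assms]]
  by (blast intro: continuous_at_imp_continuous_on)

lemma admissible_g_dd_vanish:
  assumes "admissible_g g" and "1 < \<bar>s\<bar>"
  shows "dd g (replicate n 1) s = 0"
  using assms(2)
proof (induction n arbitrary: s)
  case 0
  then show ?case
    using assms(1) unfolding admissible_g_def by simp
next
  case (Suc n)
  have "smooth_on UNIV g"
    using assms(1) unfolding admissible_g_def by simp
  then have "(dd g (replicate n 1) has_real_derivative dd g (replicate (Suc n) 1) s) (at s)"
    using smooth_on_has_real_derivative[of g "replicate n 1" s] by (simp only: replicate_Suc)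
  then show ?case
  proof (rule DERIV_local_const[where d = "\<bar>s\<bar> - 1"])
    show "0 < \<bar>s\<bar> - 1"
      using Suc.prems by simp
    show "\<forall>y. \<bar>s - y\<bar> < \<bar>s\<bar> - 1 \<longrightarrow> dd g (replicate n 1) s = dd g (replicate n 1) y"
    proof (intro allI impI)
      fix y
      assume "\<bar>s - y\<bar> < \<bar>s\<bar> - 1"
      then have "1 < \<bar>y\<bar>"
        by linarith
      then show "dd g (replicate n 1) s = dd g (replicate n 1) y"
        using Suc.IH Suc.prems by presburger
    qed
  qed
qed

definition g_modulus :: "(real \<Rightarrow> real) \<Rightarrow> real" where
  "g_modulus g = (SUP s. \<bar>deriv g s\<bar> + 2 * \<bar>deriv (deriv g) s\<bar> * s)"

lemma m_g_eq: "m_g p g = (1 + g_modulus g) / (p - 1)"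
  unfolding m_g_def g_modulus_def ..

lemma admissible_g_modulus_bound:
  assumes "admissible_g g"
  shows "\<bar>dd g [1] s\<bar> + 2 * \<bar>dd g [1,1] s\<bar> * s \<le> g_modulus g"
proof -
  have smooth: "smooth_on UNIV g"
    using assms unfolding admissible_g_def by simp
  define h where "h s = \<bar>dd g [1] s\<bar> + 2 * \<bar>dd g [1,1] s\<bar> * s" for s
  have modulus: "g_modulus g = Sup (range h)"
    unfolding g_modulus_def h_def
    using smooth_on_deriv_dd[OF smooth, of "[]"] smooth_on_deriv_dd[OF smooth, of "[1]"] by simp
  have cont: "continuous_on UNIV h"
    unfolding h_def by (intro continuous_intros smooth_on_continuous_dd[OF smooth])
  have "bounded (h ` {-1..1})"
    by (rule compact_imp_bounded[OF compact_continuous_image[OF continuous_on_subset[OF cont]]]) auto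
  then obtain B where B: "\<forall>t\<in>{-1..1}. \<bar>h t\<bar> \<le> B"
    unfolding bounded_iff by auto
  text \<open>Outside \<open>[-1, 1]\<close> both derivatives of \<open>g\<close> vanish.\<close>
  have "h t \<le> B" for t
  proof (cases "\<bar>t\<bar> \<le> 1")
    case True
    then show ?thesis
      using B by (auto simp: abs_le_iff)
  next
    case False
    then show ?thesis
      using bspec[OF B, of 0] admissible_g_dd_vanish[OF assms, of t 1] admissible_g_dd_vanish[OF assms, of t 2]
      by (simp add: h_def numeral_2_eq_2)
  qed
  then have "h s \<le> Sup (range h)"
    by (intro cSUP_upper bdd_aboveI) auto
  then show ?thesis
    unfolding modulus h_def .
qed

lemma admissible_g_modulus_nonneg:
  assumes "admissible_g g"
  shows "0 \<le> g_modulus g"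
  using admissible_g_modulus_bound[OF assms, of 0] by simp

lemma admissible_g_ge_linear:
  assumes adm: "admissible_g g" and "0 \<le> s"
  shows "1 - g_modulus g * s \<le> g s"
proof (cases "s = 0")
  case True
  then show ?thesis
    using adm unfolding admissible_g_def by simp
next
  case False
  then have "0 < s"
    using assms(2) by simp
  have "smooth_on UNIV g"
    using adm unfolding admissible_g_def by simp
  then have "(g has_real_derivative dd g [1] t) (at t)" for t
    using smooth_on_has_real_derivative[of g "[]"] by simp
  then obtain t where "0 < t" and mvt: "g s - g 0 = (s - 0) * dd g [1] t"
    using MVT2[OF \<open>0 < s\<close>] by blast
  have "0 \<le> 2 * \<bar>dd g [1,1] t\<bar> * t"
    using \<open>0 < t\<close> by simp
  then have "- g_modulus g \<le> dd g [1] t"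
    using admissible_g_modulus_bound[OF adm, of t] by linarith
  then have "s * (- g_modulus g) \<le> s * dd g [1] t"
    using \<open>0 < s\<close> by (intro mult_left_mono) auto
  then show ?thesis
    using mvt adm unfolding admissible_g_def by (simp add: mult.commute)
qed

section \<open>The base of the density and its derivatives\<close>

definition fbase :: "(real \<Rightarrow> real) \<Rightarrow> real \<Rightarrow> 'a::real_inner \<Rightarrow> 'a \<Rightarrow> real" where
  "fbase g m W z = g (inner z z) + m * (inner z z + (inner W z)\<^sup>2)"

definition fbase_d1 :: "(real \<Rightarrow> real) \<Rightarrow> real \<Rightarrow> 'a::real_inner \<Rightarrow> 'a \<Rightarrow> 'a \<Rightarrow> real" where
  "fbase_d1 g m W z h = dd g [1] (inner z z) * (2 * inner z h) + m * (2 * inner z h + 2 * inner W z * inner W h)"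

definition fbase_d2 :: "(real \<Rightarrow> real) \<Rightarrow> real \<Rightarrow> 'a::real_inner \<Rightarrow> 'a \<Rightarrow> 'a \<Rightarrow> 'a \<Rightarrow> real" where
  "fbase_d2 g m W z h k = dd g [1,1] (inner z z) * (2 * inner z h) * (2 * inner z k)
     + dd g [1] (inner z z) * (2 * inner h k) + m * (2 * inner h k + 2 * inner W h * inner W k)"

definition fbase_powr_d2 :: "real \<Rightarrow> (real \<Rightarrow> real) \<Rightarrow> real \<Rightarrow> 'a::real_inner \<Rightarrow> 'a \<Rightarrow> 'a \<Rightarrow> 'a \<Rightarrow> real" where
  "fbase_powr_d2 p g m W z h k = (p/2) * ((p/2 - 1) * fbase g m W z powr (p/2 - 2) * fbase_d1 g m W z h * fbase_d1 g m W z k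
       + fbase g m W z powr (p/2 - 1) * fbase_d2 g m W z h k)"

lemma has_derivative_inner_self: "((\<lambda>z. inner z z) has_derivative (\<lambda>h. 2 * inner z h)) (at z)"
  by (auto intro!: derivative_eq_intros simp: inner_commute)

lemma has_derivative_fbase:
  assumes "smooth_on UNIV g"
  shows "(fbase g m W has_derivative fbase_d1 g m W z) (at z)"
proof -
  have "((\<lambda>z. g (inner z z)) has_derivative (\<lambda>h. 2 * inner z h * dd g [1] (inner z z))) (at z)"
    using DERIV_compose_FDERIV[OF _ has_derivative_inner_self]
      smooth_on_has_real_derivative[OF assms, of "[]" "inner z z"] by simp
  then have "((\<lambda>z. g (inner z z) + m * (inner z z + (inner W z)\<^sup>2)) has_derivative
      (\<lambda>h. 2 * inner z h * dd g [1] (inner z z) + m * (2 * inner z h + 2 * inner W z * inner W h))) (at z)"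
    by (auto intro!: derivative_eq_intros has_derivative_inner_self
        simp: fun_eq_iff algebra_simps power2_eq_square inner_commute)
  then show ?thesis
    unfolding fbase_def[abs_def] fbase_d1_def by (simp add: ac_simps)
qed

lemma has_derivative_fbase_d1:
  assumes "smooth_on UNIV g"
  shows "((\<lambda>z. fbase_d1 g m W z k) has_derivative (\<lambda>h. fbase_d2 g m W z h k)) (at z)"
proof -
  have "((\<lambda>z. dd g [1] (inner z z)) has_derivative (\<lambda>h. 2 * inner z h * dd g [1,1] (inner z z))) (at z)"
    using DERIV_compose_FDERIV[OF _ has_derivative_inner_self]
      smooth_on_has_real_derivative[OF assms, of "[1]" "inner z z"] by simp
  then show ?thesis
    unfolding fbase_d1_def fbase_d2_def
    by (auto intro!: derivative_eq_intros has_derivative_inner_self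
        simp: fun_eq_iff algebra_simps inner_commute)
qed

lemma dd_fbase_powr:
  assumes g: "smooth_on UNIV g" and pos: "\<And>z. 0 < fbase g m W z"
  shows "dd (\<lambda>z. fbase g m W z powr (p/2)) [h, k] z = fbase_powr_d2 p g m W z h k"
proof -
  define f1 where "f1 z = fbase_d1 g m W z k * ((p/2) * fbase g m W z powr (p/2 - 1))" for z
  have "dd (\<lambda>z. fbase g m W z powr (p/2)) [k] = f1"
  proof
    fix z
    have "((\<lambda>z. fbase g m W z powr (p/2)) has_derivative
        (\<lambda>h. fbase_d1 g m W z h * ((p/2) * fbase g m W z powr (p/2 - 1)))) (at z)"
      by (rule has_derivative_powr_const[OF has_derivative_fbase[OF g] pos])
    then show "dd (\<lambda>z. fbase g m W z powr (p/2)) [k] z = f1 z"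
      unfolding f1_def by (simp add: frechet_derivative_at[symmetric])
  qed
  moreover have "(f1 has_derivative (\<lambda>h. fbase_powr_d2 p g m W z h k)) (at z)"
    unfolding f1_def
    by (rule has_derivative_eq_rhs,
        (rule has_derivative_mult has_derivative_const has_derivative_fbase_d1[OF g]
          has_derivative_powr_const[OF has_derivative_fbase[OF g] pos])+)
      (simp add: fun_eq_iff fbase_powr_d2_def algebra_simps)
  ultimately show ?thesis
    using frechet_derivative_at by (metis dd.simps(2))
qed


lemma smooth_closure_sum:
  assumes "finite I" and "\<And>i. i \<in> I \<Longrightarrow> F i \<in> smooth_closure g"
  shows "(\<lambda>z. \<Sum>i\<in>I. F i z) \<in> smooth_closure g"
  using assms by (induction I rule: finite_induct) (simp_all add: smooth_closure.const smooth_closure.add)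

lemma fbase_in_smooth_closure: "fbase g m (W::'a::euclidean_space) \<in> smooth_closure g"
proof -
  have coord: "(\<lambda>z. inner z b) \<in> smooth_closure g" for b :: 'a
    by (intro smooth_closure.linear bounded_linear_inner_left)
  have "(\<lambda>z::'a. \<Sum>b\<in>Basis. inner z b * inner z b) \<in> smooth_closure g"
    by (rule smooth_closure_sum[OF finite_Basis smooth_closure.mult[OF coord coord]])
  then have sq: "(\<lambda>z::'a. inner z z) \<in> smooth_closure g"
    by (simp only: euclidean_inner[symmetric])
  have lin: "(\<lambda>z. inner W z) \<in> smooth_closure g"
    by (intro smooth_closure.linear bounded_linear_inner_right)
  have "(\<lambda>z. dd g (replicate 0 1) (inner z z) + m * (inner z z + inner W z * inner W z)) \<in> smooth_closure g"
    by (rule smooth_closure.add[OF smooth_closure.profile[OF sq]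
          smooth_closure.mult[OF smooth_closure.const smooth_closure.add[OF sq smooth_closure.mult[OF lin lin]]]])
  then show ?thesis
    by (simp add: fbase_def[abs_def] power2_eq_square)
qed

lemma continuous_on_fbase_powr_d2:
  fixes Wf :: "'b::topological_space \<Rightarrow> 'a::real_inner"
  assumes g: "smooth_on UNIV g" and W: "continuous_on X Wf"
    and pos: "\<And>x z. x \<in> X \<Longrightarrow> 0 < fbase g m (Wf x) z"
  shows "continuous_on (X \<times> UNIV) (\<lambda>(x, z). fbase_powr_d2 p g m (Wf x) z h k)"
proof -
  let ?S = "X \<times> (UNIV :: 'a set)"
  have sq: "continuous_on ?S (\<lambda>q. inner (snd q) (snd q))"
    by (intro continuous_intros)
  have profile: "continuous_on ?S (\<lambda>q. dd g hs (inner (snd q) (snd q)))" for hs :: "real list"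
    by (rule continuous_on_compose2[OF smooth_on_continuous_dd[OF g] sq]) auto
  have W': "continuous_on ?S (\<lambda>q. Wf (fst q))"
    by (rule continuous_on_compose2[OF W]) (auto intro: continuous_intros)
  have "continuous_on ?S (\<lambda>q. fbase g m (Wf (fst q)) (snd q))"
    unfolding fbase_def using profile[of "[]"] by (intro continuous_intros W') simp
  then have "continuous_on ?S (\<lambda>q. fbase_powr_d2 p g m (Wf (fst q)) (snd q) h k)"
    unfolding fbase_powr_d2_def fbase_d1_def fbase_d2_def
    by (intro continuous_intros profile W') (use pos in \<open>auto simp: less_imp_neq[symmetric]\<close>)
  then show ?thesis
    by (simp add: case_prod_unfold)
qed

section \<open>Scalar inequalities\<close>

lemma Cauchy_Schwarz_two_terms:
  fixes A B X1 X2 Y1 Y2 :: real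
  assumes "0 \<le> X1" "0 \<le> X2" "0 \<le> Y1" "0 \<le> Y2" "A\<^sup>2 \<le> X1 * Y1" "B\<^sup>2 \<le> X2 * Y2"
  shows "(A + B)\<^sup>2 \<le> (X1 + X2) * (Y1 + Y2)"
proof -
  have "(2 * \<bar>A\<bar> * \<bar>B\<bar>)\<^sup>2 = 4 * A\<^sup>2 * B\<^sup>2"
    by (simp add: power_mult_distrib)
  also have "\<dots> \<le> 4 * (X1 * Y1) * (X2 * Y2)"
    using assms by (intro mult_mono) auto
  also have "\<dots> \<le> (X1 * Y2 + X2 * Y1)\<^sup>2"
    using zero_le_power2[of "X1 * Y2 - X2 * Y1"] by (simp add: power2_eq_square algebra_simps)
  finally have "2 * \<bar>A\<bar> * \<bar>B\<bar> \<le> X1 * Y2 + X2 * Y1"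
    by (rule power2_le_imp_le) (use assms in simp)
  moreover have "A * B \<le> \<bar>A\<bar> * \<bar>B\<bar>"
    by (simp add: abs_mult[symmetric])
  ultimately show ?thesis
    using assms(5,6) by (simp add: power2_eq_square algebra_simps)
qed

text \<open>At a point \<open>z\<close> and in a direction \<open>\<lambda>\<close> write
  \<open>s = |z|\<^sup>2\<close>, \<open>L2 = |\<lambda>|\<^sup>2\<close>, \<open>w = \<langle>z,\<lambda>\<rangle>\<close>, \<open>lz = \<langle>W,z\<rangle>\<close>, \<open>ll = \<langle>W,\<lambda>\<rangle>\<close>, \<open>G = g s\<close>,
  \<open>g1 = g' s\<close>, \<open>g2 = g'' s\<close>, and \<open>T\<close> for the modulus of \<open>g\<close>, so that \<open>m = (1 + T)/(p - 1)\<close>.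
  The three quantities \<open>b\<close>, \<open>Dv\<close>, \<open>DD\<close> below are \<open>fbase\<close> and its first and second
  derivatives in direction \<open>\<lambda>\<close>.\<close>

lemma fbase_d2_ge_scalar:
  fixes g1 g2 s w L2 ll m T :: real
  assumes "\<bar>g1\<bar> + 2 * \<bar>g2\<bar> * s \<le> T" "0 \<le> s" "w\<^sup>2 \<le> s * L2" "0 \<le> L2"
  shows "(m - T + g1 + \<bar>g1\<bar>) * L2 + m * ll\<^sup>2
    \<le> (4 * g2 * w\<^sup>2 + 2 * g1 * L2 + m * (2 * L2 + 2 * ll\<^sup>2)) / 2"
proof -
  have "\<bar>g2\<bar> * w\<^sup>2 \<le> \<bar>g2\<bar> * (s * L2)"
    using assms by (intro mult_left_mono) auto
  moreover have "2 * \<bar>g2\<bar> * s * L2 \<le> (T - \<bar>g1\<bar>) * L2"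
    using assms by (intro mult_right_mono) auto
  moreover have "- (\<bar>g2\<bar> * w\<^sup>2) \<le> g2 * w\<^sup>2"
    using abs_ge_minus_self[of "g2 * w\<^sup>2"] by (simp add: abs_mult)
  moreover have "0 \<le> (\<bar>g1\<bar> + g1) * L2"
    using assms by simp
  ultimately show ?thesis
    by (simp add: algebra_simps)
qed

lemma hessian_coefficient_bound:
  fixes p m T g1 :: real
  assumes p: "1 < p" "p < 2" and T: "T = (p - 1) * m - 1" "0 \<le> T" and g1: "\<bar>g1\<bar> \<le> T"
  shows "m \<le> m * (m - T + g1 + \<bar>g1\<bar>) - (2 - p) * (g1 + m)\<^sup>2"
proof (cases "0 \<le> g1")
  case True
  have "g1 \<le> (p - 1) * m"
    using g1 T True by linarith
  then have "(2 - p) * (g1 * g1) \<le> (2 - p) * (g1 * ((p - 1) * m))"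
    using True p by (intro mult_left_mono) auto
  also have "\<dots> \<le> 2 * (g1 * ((p - 1) * m))"
    using True p T by (intro mult_right_mono) auto
  finally show ?thesis
    unfolding T(1) using True by (simp add: power2_eq_square algebra_simps)
next
  case False
  have "0 < m"
    using p T by (smt (verit) mult_nonneg_nonpos)
  have "0 \<le> g1 + m" "g1 + m \<le> m"
    using False g1 T p \<open>0 < m\<close> by (smt (verit) mult_left_le_one_le)+
  then have "(2 - p) * (g1 + m)\<^sup>2 \<le> (2 - p) * m\<^sup>2"
    using p by (intro mult_left_mono power_mono) auto
  then show ?thesis
    using False unfolding T(1) by (simp add: power2_eq_square algebra_simps)
qed


lemma fbase_hessian_ge_scalar:
  fixes p m T G g1 g2 s w L2 lz ll \<delta> :: real
  assumes p: "1 < p" "p < 2" and T: "T = (p - 1) * m - 1" "0 \<le> T"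
    and G: "0 \<le> G" and s: "0 \<le> s" and L2: "0 \<le> L2" and w: "w\<^sup>2 \<le> s * L2"
    and g: "\<bar>g1\<bar> + 2 * \<bar>g2\<bar> * s \<le> T"
    and \<delta>: "0 < \<delta>" "\<delta> \<le> p - 1" "\<delta> * ((2 - p) * m + 1 + 2 * T) \<le> 1"
  defines "b \<equiv> G + m * (s + lz\<^sup>2)"
    and "Dv \<equiv> 2 * g1 * w + m * (2 * w + 2 * lz * ll)"
    and "DD \<equiv> 4 * g2 * w\<^sup>2 + 2 * g1 * L2 + m * (2 * L2 + 2 * ll\<^sup>2)"
  shows "2 * \<delta> * b * L2 \<le> b * DD - (1 - p/2) * Dv\<^sup>2"
proof -
  define r where "r = m - T + g1 + \<bar>g1\<bar>"
  define a where "a = g1 + m"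
  define X where "X = a\<^sup>2 * s / r + m * lz\<^sup>2"
  define Y where "Y = r * L2 + m * ll\<^sup>2"
  have m: "0 < m"
    using p T by (smt (verit) mult_nonneg_nonpos)
  have g1: "\<bar>g1\<bar> \<le> T"
    using g s by (smt (verit) mult_nonneg_nonneg)
  have "0 \<le> (2 - p) * m"
    using p m by simp
  then have r: "1 \<le> r" "r \<le> (2 - p) * m + 1 + 2 * T"
    unfolding r_def using T g1 by (simp_all add: algebra_simps)
  have b: "0 \<le> b"
    unfolding b_def using G s m by simp
  have Y: "Y \<le> DD / 2"
    unfolding Y_def r_def DD_def by (rule fbase_d2_ge_scalar[OF g s w L2])
  have Dv_half: "Dv / 2 = a * w + m * lz * ll"
    unfolding Dv_def a_def by (simp add: algebra_simps)
  have "(a * w)\<^sup>2 \<le> a\<^sup>2 * s / r * (r * L2)"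
    using w r by (simp add: power_mult_distrib mult_left_mono)
  moreover have "(m * lz * ll)\<^sup>2 \<le> m * lz\<^sup>2 * (m * ll\<^sup>2)"
    by (simp add: power_mult_distrib power2_eq_square)
  ultimately have CS: "(Dv / 2)\<^sup>2 \<le> X * Y"
    unfolding X_def Y_def Dv_half using s r m L2 by (intro Cauchy_Schwarz_two_terms) auto
  have "\<delta> * b \<le> G + s * m / r + (p - 1) * (m * lz\<^sup>2)"
  proof -
    have "\<delta> * r \<le> 1"
      using r \<delta> by (smt (verit) mult_left_mono)
    then have "\<delta> * r * (m * s) \<le> 1 * (m * s)"
      using m s by (intro mult_right_mono) auto
    then have "\<delta> * (m * s) \<le> s * m / r"
      using r by (simp add: field_simps)
    moreover have "\<delta> * G \<le> G" "\<delta> * (m * lz\<^sup>2) \<le> (p - 1) * (m * lz\<^sup>2)"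
      using \<delta> p G m by (simp_all add: mult_left_le_one_le mult_right_mono)
    ultimately show ?thesis
      unfolding b_def by (simp add: algebra_simps)
  qed
  also have "\<dots> \<le> G + s * (m * r - (2 - p) * a\<^sup>2) / r + (p - 1) * (m * lz\<^sup>2)"
    using hessian_coefficient_bound[OF p T g1] s r
    unfolding r_def a_def by (simp add: divide_right_mono mult_left_mono)
  also have "\<dots> = b - (2 - p) * X"
    unfolding b_def X_def using r by (simp add: field_simps)
  finally have X: "(2 - p) * X \<le> (1 - \<delta>) * b"
    by (simp add: algebra_simps)
  have Y0: "0 \<le> Y"
    unfolding Y_def using r L2 m by simp
  have \<delta>b: "0 \<le> \<delta> * b" "0 \<le> (1 - \<delta>) * b"
    using \<delta> p b by simp_all
  have "(1 - p/2) * Dv\<^sup>2 = 2 * ((2 - p) * (Dv / 2)\<^sup>2)"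
    by (simp add: power2_eq_square field_simps)
  also have "\<dots> \<le> 2 * ((2 - p) * X * Y)"
    using CS p by (simp add: mult.assoc)
  also have "\<dots> \<le> 2 * ((1 - \<delta>) * b * Y)"
    using mult_right_mono[OF X Y0] by simp
  also have "\<dots> \<le> (1 - \<delta>) * b * DD"
    using mult_left_mono[OF Y \<delta>b(2)] by simp
  finally have Dv: "(1 - p/2) * Dv\<^sup>2 \<le> b * DD - \<delta> * b * DD"
    by (simp add: algebra_simps)
  have "L2 \<le> r * L2"
    using mult_right_mono[OF r(1) L2] by (simp only: mult_1)
  moreover have "0 \<le> m * ll\<^sup>2"
    using m by simp
  ultimately have "2 * L2 \<le> DD"
    using Y unfolding Y_def by linarith
  then have "2 * \<delta> * b * L2 \<le> \<delta> * b * DD"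
    using mult_left_mono[OF _ \<delta>b(1)] by (simp add: mult.assoc mult.left_commute)
  with Dv show ?thesis
    by linarith
qed


lemma fbase_d2_le_scalar:
  fixes g1 g2 w s L2 ll K m T :: real
  assumes "\<bar>g1\<bar> + 2 * \<bar>g2\<bar> * s \<le> T" "0 \<le> s" "w\<^sup>2 \<le> s * L2" "0 \<le> L2" "ll\<^sup>2 \<le> K * L2" "0 \<le> m"
  shows "4 * g2 * w\<^sup>2 + 2 * g1 * L2 + m * (2 * L2 + 2 * ll\<^sup>2) \<le> 2 * (T + m * (1 + K)) * L2"
proof -
  have "g2 * w\<^sup>2 \<le> \<bar>g2\<bar> * w\<^sup>2"
    by (intro mult_right_mono) auto
  also have "\<dots> \<le> \<bar>g2\<bar> * (s * L2)"
    using assms by (intro mult_left_mono) auto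
  moreover have "g1 * L2 \<le> \<bar>g1\<bar> * L2" "(\<bar>g1\<bar> + 2 * \<bar>g2\<bar> * s) * L2 \<le> T * L2" "m * ll\<^sup>2 \<le> m * (K * L2)"
    using assms by (auto intro: mult_right_mono mult_left_mono)
  ultimately show ?thesis
    by (simp add: algebra_simps)
qed

lemma powr_hessian_eq:
  fixes b D DD p :: real
  assumes "0 < b"
  shows "(p/2) * ((p/2 - 1) * b powr (p/2 - 2) * D\<^sup>2 + b powr (p/2 - 1) * DD)
    = (p/2) * b powr (p/2 - 2) * (b * DD - (1 - p/2) * D\<^sup>2)"
proof -
  have "b powr (p/2 - 1) = b powr (p/2 - 2) * b"
    using assms powr_add[of b "p/2 - 2" 1] by simp
  then show ?thesis
    by (simp add: algebra_simps)
qed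

lemma powr_hessian_ge:
  fixes b B D DD L2 \<delta> p :: real
  assumes p: "0 < p" "p < 2" and b: "0 < b" "b \<le> B" and "0 \<le> \<delta> * L2"
    and E: "2 * \<delta> * b * L2 \<le> b * DD - (1 - p/2) * D\<^sup>2"
  shows "p * \<delta> * B powr (p/2 - 1) * L2 \<le> (p/2) * ((p/2 - 1) * b powr (p/2 - 2) * D\<^sup>2 + b powr (p/2 - 1) * DD)"
proof -
  have "B powr (p/2 - 1) \<le> b powr (p/2 - 1)"
    using p b by (intro powr_mono2') auto
  moreover have "0 \<le> p * (\<delta> * L2)"
    using assms(5) p by simp
  ultimately have "p * (\<delta> * L2) * B powr (p/2 - 1) \<le> p * (\<delta> * L2) * b powr (p/2 - 1)"
    by (rule mult_left_mono)
  then have "p * \<delta> * B powr (p/2 - 1) * L2 \<le> p * \<delta> * b powr (p/2 - 1) * L2"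
    by (simp add: mult_ac)
  also have "\<dots> = (p/2) * b powr (p/2 - 2) * (2 * \<delta> * b * L2)"
    using b powr_add[of b "p/2 - 2" 1] by (simp add: algebra_simps)
  also have "\<dots> \<le> (p/2) * b powr (p/2 - 2) * (b * DD - (1 - p/2) * D\<^sup>2)"
    using E p by (intro mult_left_mono) auto
  finally show ?thesis
    unfolding powr_hessian_eq[OF b(1)] .
qed

lemma powr_hessian_le:
  fixes b B D DD L2 K p :: real
  assumes p: "0 < p" "p < 2" and b: "0 < B" "B \<le> b" and "0 \<le> K * L2" and DD: "DD \<le> K * L2"
  shows "(p/2) * ((p/2 - 1) * b powr (p/2 - 2) * D\<^sup>2 + b powr (p/2 - 1) * DD) \<le> (p/2) * K * B powr (p/2 - 1) * L2"
proof -
  have "(p/2 - 1) * b powr (p/2 - 2) * D\<^sup>2 \<le> 0"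
    using p by (simp add: mult_nonpos_nonneg)
  moreover have "b powr (p/2 - 1) * DD \<le> b powr (p/2 - 1) * (K * L2)"
    using DD by (intro mult_left_mono) auto
  moreover have "b powr (p/2 - 1) \<le> B powr (p/2 - 1)"
    using p b by (intro powr_mono2') auto
  then have "b powr (p/2 - 1) * (K * L2) \<le> B powr (p/2 - 1) * (K * L2)"
    using assms(5) by (intro mult_right_mono)
  ultimately have "(p/2) * ((p/2 - 1) * b powr (p/2 - 2) * D\<^sup>2 + b powr (p/2 - 1) * DD)
      \<le> (p/2) * (B powr (p/2 - 1) * (K * L2))"
    using p by (intro mult_left_mono) auto
  then show ?thesis
    by (simp add: mult_ac)
qed


lemma powr_mult_power2:
  fixes c x e :: real
  assumes "0 \<le> c" and "0 \<le> x"
  shows "(c * x\<^sup>2) powr e = c powr e * x powr (2 * e)"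
proof -
  have "(x\<^sup>2) powr e = x powr (2 * e)"
  proof (cases "x = 0")
    case False
    then have "x\<^sup>2 = x powr 2"
      using assms(2) powr_realpow[of x 2] by simp
    then show ?thesis
      by (simp add: powr_powr)
  qed simp
  then show ?thesis
    using assms by (simp add: powr_mult)
qed

lemma fbase_bounds_scalar:
  fixes G m T s lz K :: real
  assumes "1 - T * s \<le> G" "G \<le> 1" "1 \<le> m - T" and m: "0 \<le> m"
    and "0 \<le> s" "lz\<^sup>2 \<le> K * s" "0 \<le> K"
  shows "1 + s \<le> G + m * (s + lz\<^sup>2)" and "G + m * (s + lz\<^sup>2) \<le> (1 + m * (1 + K)) * (1 + s)"
proof -
  have "1 * s \<le> (m - T) * s"
    using assms by (intro mult_right_mono) auto
  moreover have "0 \<le> m * lz\<^sup>2"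
    using m by simp
  ultimately show "1 + s \<le> G + m * (s + lz\<^sup>2)"
    using assms(1) by (simp add: algebra_simps)
  have "m * lz\<^sup>2 \<le> m * (K * s)"
    using assms m by (intro mult_left_mono) auto
  moreover have "0 \<le> m * (1 + K)"
    using assms m by simp
  moreover have "(1 + m * (1 + K)) * (1 + s) = 1 + s + m * (1 + K) + m * s + m * (K * s)"
    by (simp add: algebra_simps)
  ultimately show "G + m * (s + lz\<^sup>2) \<le> (1 + m * (1 + K)) * (1 + s)"
    using assms(2,5) by (simp add: distrib_left)
qed

section \<open>Bounds for the density\<close>

definition Afactor_bound :: "real \<Rightarrow> real" where
  "Afactor_bound p = 4 * (1 + 2*p/(2-p))\<^sup>2"

definition fbase_const :: "real \<Rightarrow> real \<Rightarrow> real" where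
  "fbase_const p M = 1 + \<bar>M\<bar> * (1 + Afactor_bound p)"

text \<open>The constants below depend on \<open>p\<close> and \<open>M = m_g p g\<close> only; the absolute values make them
  meaningful for every \<open>M\<close>, although only \<open>M > 0\<close> occurs, and then \<open>(p - 1) M - 1\<close> is the
  modulus of \<open>g\<close>.\<close>

definition hessian_delta :: "real \<Rightarrow> real \<Rightarrow> real" where
  "hessian_delta p M = min (p - 1) (1 / (1 + \<bar>(2 - p) * M + 1 + 2 * ((p - 1) * M - 1)\<bar>))"

definition density_lower_const :: "real \<Rightarrow> real \<Rightarrow> real" where
  "density_lower_const p M = min 1 (p * hessian_delta p M * fbase_const p M powr (p/2 - 1))"

definition density_upper_const :: "real \<Rightarrow> real \<Rightarrow> real" where
  "density_upper_const p M = max 1 (max (fbase_const p M powr (p/2))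
     (p * (\<bar>(p - 1) * M - 1\<bar> + \<bar>M\<bar> * (1 + Afactor_bound p)) * 2 powr (1 - p/2)))"

lemma fbase_const_pos: "0 < fbase_const p M"
  unfolding fbase_const_def Afactor_bound_def by (simp add: add_pos_nonneg)

lemma density_lower_const_pos:
  assumes "1 < p"
  shows "0 < density_lower_const p M"
  using assms fbase_const_pos[of p M]
  unfolding density_lower_const_def hessian_delta_def by (simp add: add_pos_nonneg)

lemma density_lower_le_upper_const: "density_lower_const p M \<le> density_upper_const p M"
  unfolding density_lower_const_def density_upper_const_def by simp

locale admissible_density =
  fixes p :: real and g :: "real \<Rightarrow> real"
  assumes p: "1 < p" "p < 2" and admissible: "admissible_g g"
begin

abbreviation "M \<equiv> m_g p g"
abbreviation "T \<equiv> g_modulus g"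
abbreviation "C \<equiv> fbase_const p M"

lemma g_smooth: "smooth_on UNIV g"
  using admissible unfolding admissible_g_def by simp

lemma modulus_eq: "T = (p - 1) * M - 1"
  using p unfolding m_g_eq by (simp add: field_simps)

lemma modulus_nonneg: "0 \<le> T"
  by (rule admissible_g_modulus_nonneg[OF admissible])

lemma m_g_pos: "0 < M"
proof -
  have "0 < (p - 1) * M"
    using modulus_eq modulus_nonneg by linarith
  then show ?thesis
    using p by (simp add: zero_less_mult_iff)
qed

lemma fdens_eq: "fdens p g x = (\<lambda>z. fbase g M (Afactor p (x /\<^sub>R norm x)) z powr (p/2))"
  unfolding fdens_def fbase_def Aform_eq_inner power2_norm_eq_inner
  by (simp add: fun_eq_iff power2_eq_square)

lemma fbase_bounds:
  "1 + (norm z)\<^sup>2 \<le> fbase g M (Afactor p u) z"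
  "fbase g M (Afactor p u) z \<le> C * (1 + (norm z)\<^sup>2)"
proof -
  have "M - T = (2 - p) * M + 1"
    by (simp add: modulus_eq algebra_simps)
  moreover have "0 \<le> (2 - p) * M"
    using p m_g_pos by simp
  ultimately have "1 \<le> M - T"
    by linarith
  moreover have "(inner (Afactor p u) z)\<^sup>2 \<le> Afactor_bound p * (norm z)\<^sup>2"
    unfolding Afactor_bound_def using Afactor_inner_sq_le p by simp
  moreover have "1 - T * (norm z)\<^sup>2 \<le> g ((norm z)\<^sup>2)" "g ((norm z)\<^sup>2) \<le> 1"
    using admissible_g_ge_linear[OF admissible] admissible unfolding admissible_g_def by auto
  ultimately show "1 + (norm z)\<^sup>2 \<le> fbase g M (Afactor p u) z"
    and "fbase g M (Afactor p u) z \<le> C * (1 + (norm z)\<^sup>2)"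
    using fbase_bounds_scalar[of T "(norm z)\<^sup>2" "g ((norm z)\<^sup>2)" M "inner (Afactor p u) z" "Afactor_bound p"] m_g_pos
    unfolding fbase_def fbase_const_def Afactor_bound_def power2_norm_eq_inner by auto
qed

lemma fbase_pos: "0 < fbase g M (Afactor p u) z"
  using fbase_bounds(1)[of z u] zero_le_power2[of "norm z"] by linarith

lemma smooth_on_fdens: "smooth_on UNIV (fdens p g x)"
  unfolding fdens_eq
  by (rule smooth_closure_smooth_on[OF g_smooth smooth_closure.powr[OF fbase_in_smooth_closure]])
    (simp add: fbase_pos)

lemma dd_fdens: "dd (fdens p g x) [h, k] z = fbase_powr_d2 p g M (Afactor p (x /\<^sub>R norm x)) z h k"
  unfolding fdens_eq by (rule dd_fbase_powr[OF g_smooth fbase_pos])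

lemma continuous_on_dd_fdens:
  "continuous_on ({x. x \<noteq> 0} \<times> UNIV) (\<lambda>(x, z). dd (fdens p g x) [h, k] z)"
proof -
  have "continuous_on {x::real^2. x \<noteq> 0} (\<lambda>x. Afactor p (x /\<^sub>R norm x))"
    unfolding Afactor_def by (intro continuous_intros) auto
  then show ?thesis
    unfolding dd_fdens by (rule continuous_on_fbase_powr_d2[OF g_smooth _ fbase_pos])
qed


lemma fbase_le_square: "fbase g M (Afactor p u) z \<le> C * (1 + norm z)\<^sup>2"
proof -
  have "C * (1 + (norm z)\<^sup>2) \<le> C * (1 + norm z)\<^sup>2"
    using fbase_const_pos[THEN less_imp_le]
    by (intro mult_left_mono) (auto simp: power2_eq_square algebra_simps)
  then show ?thesis
    using fbase_bounds(2)[of u z] by linarith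
qed

lemma fbase_ge_square: "(1 + norm z)\<^sup>2 / 2 \<le> fbase g M (Afactor p u) z"
proof -
  have "(1 + norm z)\<^sup>2 \<le> 2 * (1 + (norm z)\<^sup>2)"
    using zero_le_power2[of "1 - norm z"] by (simp add: power2_eq_square algebra_simps)
  also have "\<dots> \<le> 2 * fbase g M (Afactor p u) z"
    using fbase_bounds(1)[of z u] by simp
  finally show ?thesis
    by simp
qed

lemma fdens_ge: "density_lower_const p M * norm z powr p \<le> fdens p g x z"
proof -
  have "norm z powr p = ((norm z)\<^sup>2) powr (p/2)"
    using powr_mult_power2[of 1 "norm z" "p/2"] by simp
  also have "\<dots> \<le> fdens p g x z"
  proof -
    have "(norm z)\<^sup>2 \<le> fbase g M (Afactor p (x /\<^sub>R norm x)) z"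
      using fbase_bounds(1)[of z "x /\<^sub>R norm x"] by linarith
    then show ?thesis
      unfolding fdens_eq using p by (intro powr_mono2) auto
  qed
  finally show ?thesis
    using density_lower_const_pos[OF p(1), of M]
    by (smt (verit) density_lower_const_def min.cobounded1 mult_left_le_one_le powr_ge_zero)
qed

lemma fdens_le: "fdens p g x z \<le> density_upper_const p M * (1 + norm z) powr p"
proof -
  have "fdens p g x z \<le> (C * (1 + norm z)\<^sup>2) powr (p/2)"
    unfolding fdens_eq using fbase_le_square fbase_pos p by (intro powr_mono2) (auto intro: less_imp_le)
  also have "\<dots> = C powr (p/2) * (1 + norm z) powr p"
    using powr_mult_power2[of C "1 + norm z" "p/2"] fbase_const_pos[THEN less_imp_le] by simp
  also have "\<dots> \<le> density_upper_const p M * (1 + norm z) powr p"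
    unfolding density_upper_const_def by (intro mult_right_mono) auto
  finally show ?thesis .
qed

lemma fbase_hessian_lower:
  fixes W :: "'a::real_inner"
  shows "2 * hessian_delta p M * fbase g M W z * (norm lam)\<^sup>2
    \<le> fbase g M W z * fbase_d2 g M W z lam lam - (1 - p/2) * (fbase_d1 g M W z lam)\<^sup>2"
proof -
  let ?s = "inner z z"
  define \<delta> where "\<delta> = hessian_delta p M"
  have "\<delta> * ((2 - p) * M + 1 + 2 * T) \<le> 1"
  proof -
    define r where "r = (2 - p) * M + 1 + 2 * T"
    have "\<delta> \<le> 1 / (1 + \<bar>r\<bar>)" "0 < \<delta>"
      unfolding \<delta>_def hessian_delta_def r_def modulus_eq using p by simp_all
    then have "\<delta> * (1 + \<bar>r\<bar>) \<le> 1"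
      by (simp add: field_simps)
    moreover have "\<delta> * r \<le> \<delta> * (1 + \<bar>r\<bar>)"
      using \<open>0 < \<delta>\<close> by (intro mult_left_mono) auto
    ultimately show ?thesis
      unfolding r_def by linarith
  qed
  moreover have "0 < \<delta>" "\<delta> \<le> p - 1"
    unfolding \<delta>_def hessian_delta_def using p by simp_all
  moreover have "\<bar>dd g [1] ?s\<bar> + 2 * \<bar>dd g [1,1] ?s\<bar> * ?s \<le> T"
    by (rule admissible_g_modulus_bound[OF admissible])
  moreover have "0 \<le> g ?s"
    using admissible unfolding admissible_g_def by simp
  ultimately have "2 * \<delta> * fbase g M W z * inner lam lam
    \<le> fbase g M W z * fbase_d2 g M W z lam lam - (1 - p/2) * (fbase_d1 g M W z lam)\<^sup>2"
    unfolding fbase_def fbase_d1_def fbase_d2_def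
    using fbase_hessian_ge_scalar[OF p modulus_eq modulus_nonneg, of "g ?s" ?s "inner lam lam" "inner z lam"
        "dd g [1] ?s" "dd g [1,1] ?s" \<delta> "inner W z" "inner W lam"] Cauchy_Schwarz_ineq[of z lam]
    by (simp add: power2_eq_square algebra_simps)
  then show ?thesis
    unfolding \<delta>_def power2_norm_eq_inner .
qed

lemma fbase_d2_upper:
  "fbase_d2 g M (Afactor p u) z lam lam \<le> 2 * (T + M * (1 + Afactor_bound p)) * (norm lam)\<^sup>2"
proof -
  let ?s = "inner z z"
  have "(inner (Afactor p u) lam)\<^sup>2 \<le> Afactor_bound p * inner lam lam"
    using Afactor_inner_sq_le[of p u lam] p unfolding Afactor_bound_def power2_norm_eq_inner by simp
  then show ?thesis
    unfolding fbase_d2_def power2_norm_eq_inner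
    using fbase_d2_le_scalar[OF admissible_g_modulus_bound[OF admissible, of ?s], of "inner z lam" "inner lam lam"
        "inner (Afactor p u) lam" "Afactor_bound p" M] Cauchy_Schwarz_ineq[of z lam] m_g_pos
    by (simp add: power2_eq_square algebra_simps)
qed


lemma dd_fdens_eq:
  "dd (fdens p g x) [lam, lam] z
    = (p/2) * ((p/2 - 1) * fbase g M (Afactor p (x /\<^sub>R norm x)) z powr (p/2 - 2)
          * (fbase_d1 g M (Afactor p (x /\<^sub>R norm x)) z lam)\<^sup>2
        + fbase g M (Afactor p (x /\<^sub>R norm x)) z powr (p/2 - 1)
          * fbase_d2 g M (Afactor p (x /\<^sub>R norm x)) z lam lam)"
  unfolding dd_fdens fbase_powr_d2_def by (simp add: power2_eq_square)

lemma dd_fdens_ge: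
  "density_lower_const p M * (1 + norm z) powr (p - 2) * (norm lam)\<^sup>2 \<le> dd (fdens p g x) [lam, lam] z"
proof -
  define \<delta> where "\<delta> = hessian_delta p M"
  have "0 < \<delta>"
    unfolding \<delta>_def hessian_delta_def using p by simp
  have "p * \<delta> * (C * (1 + norm z)\<^sup>2) powr (p/2 - 1) * (norm lam)\<^sup>2 \<le> dd (fdens p g x) [lam, lam] z"
    unfolding dd_fdens_eq \<delta>_def
    using p \<open>0 < \<delta>\<close> fbase_pos fbase_le_square fbase_hessian_lower
    by (intro powr_hessian_ge) (auto simp: \<delta>_def)
  moreover have "(C * (1 + norm z)\<^sup>2) powr (p/2 - 1) = C powr (p/2 - 1) * (1 + norm z) powr (p - 2)"
    using powr_mult_power2[of C "1 + norm z"] fbase_const_pos[THEN less_imp_le] by (simp add: algebra_simps)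
  moreover have "density_lower_const p M \<le> p * \<delta> * C powr (p/2 - 1)"
    unfolding density_lower_const_def \<delta>_def by simp
  then have "density_lower_const p M * ((1 + norm z) powr (p - 2) * (norm lam)\<^sup>2)
      \<le> p * \<delta> * C powr (p/2 - 1) * ((1 + norm z) powr (p - 2) * (norm lam)\<^sup>2)"
    by (intro mult_right_mono) auto
  ultimately show ?thesis
    by (simp add: mult_ac)
qed

lemma dd_fdens_le:
  "dd (fdens p g x) [lam, lam] z \<le> density_upper_const p M * (1 + norm z) powr (p - 2) * (norm lam)\<^sup>2"
proof -
  define K where "K = 2 * (T + M * (1 + Afactor_bound p))"
  have K: "0 \<le> K"
    unfolding K_def Afactor_bound_def using modulus_nonneg m_g_pos by simp
  have "0 < 1 + norm z"
    using norm_ge_zero[of z] by linarith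
  then have "0 < (1 + norm z)\<^sup>2 / 2"
    by simp
  then have "dd (fdens p g x) [lam, lam] z \<le> (p/2) * K * ((1 + norm z)\<^sup>2 / 2) powr (p/2 - 1) * (norm lam)\<^sup>2"
    unfolding dd_fdens_eq K_def
    using p fbase_ge_square fbase_d2_upper K
    by (intro powr_hessian_le) (auto simp: K_def)
  also have "((1 + norm z)\<^sup>2 / 2) powr (p/2 - 1) = 2 powr (1 - p/2) * (1 + norm z) powr (p - 2)"
    using powr_mult_power2[of "1/2" "1 + norm z" "p/2 - 1"]
    by (simp add: powr_divide powr_minus_divide[symmetric] algebra_simps)
  also have "(p/2) * K * (2 powr (1 - p/2) * (1 + norm z) powr (p - 2)) * (norm lam)\<^sup>2
      = (p * (T + M * (1 + Afactor_bound p)) * 2 powr (1 - p/2)) * ((1 + norm z) powr (p - 2) * (norm lam)\<^sup>2)"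
    unfolding K_def by (simp add: mult_ac)
  also have "\<dots> \<le> density_upper_const p M * ((1 + norm z) powr (p - 2) * (norm lam)\<^sup>2)"
    unfolding density_upper_const_def modulus_eq[symmetric]
    using modulus_nonneg m_g_pos by (intro mult_right_mono) auto
  finally show ?thesis
    by (simp add: mult_ac)
qed

end

theorem proposition3p1:
  fixes p :: real
  assumes "1 < p" and "p < 2"
  shows "\<forall>M. \<exists>\<nu> L. 0 < \<nu> \<and> \<nu> \<le> L \<and>
    (\<forall>g. admissible_g g \<and> m_g p g = M \<longrightarrow>
       (\<forall>x. x \<noteq> 0 \<longrightarrow> smooth_on UNIV (fdens p g x))
     \<and> (\<forall>h k. continuous_on ({x. x \<noteq> 0} \<times> UNIV)
            (\<lambda>(x, z). dd (fdens p g x) [h, k] z))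
     \<and> (\<forall>x z. x \<noteq> 0 \<longrightarrow>
            \<nu> * norm z powr p \<le> fdens p g x z \<and> fdens p g x z \<le> L * (1 + norm z) powr p)
     \<and> (\<forall>x z lam. x \<noteq> 0 \<longrightarrow>
            \<nu> * (1 + norm z) powr (p - 2) * (norm lam)\<^sup>2 \<le> dd (fdens p g x) [lam, lam] z
          \<and> dd (fdens p g x) [lam, lam] z \<le> L * (1 + norm z) powr (p - 2) * (norm lam)\<^sup>2))"
proof -
  have density: "admissible_density p g" if "admissible_g g" for g
    using assms that by unfold_locales
  show ?thesis
    apply (intro allI)
    subgoal for M
      apply (rule exI[of _ "density_lower_const p M"], rule exI[of _ "density_upper_const p M"])
      using density_lower_const_pos[OF assms(1), of M] density_lower_le_upper_const[of p M]
        admissible_density.smooth_on_fdens[OF density] admissible_density.continuous_on_dd_fdens[OF density]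
        admissible_density.fdens_ge[OF density] admissible_density.fdens_le[OF density]
        admissible_density.dd_fdens_ge[OF density] admissible_density.dd_fdens_le[OF density]
      by blast
    done
qed

end
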